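(* Let $k\ge1$, $m\ge1$, and let $y^0,\bar y^0,\dots,y^{2k},\bar y^{2k}\in\{0,1\}^m$ be $4k+2$ pairwise distinct vectors satisfying $$y^i+\bar y^i=y^0+\bar y^0\quad\text{for all } i\in\{0,\dots,2k\}.$$ With $J$, $j_0$, $U_i$, $\bar U_i$ as defined in the context, there exists $t\in\{2,3,\dots,2k\}$ such that the set $U_0\triangle U_1\triangle U_t$ is different from every $U_p$ and from every $\bar U_p$, for $0\le p\le 2k$.
   Context: **Index sets.** - $I=\{i\in[m]: y^0_i=\bar y^0_i\}$ and $J=[m]\setminus I=\{j: y^0_j+\bar y^0_j=1\}$. The set $J$ is nonempty. - Fix any $j_0\in J$. - For $i\in\{0,\dots,2k\}$, let $U_i=\{j\in J: y^i_j=1\}$ if $y^i_{j_0}=1$, and $U_i=\{j\in J:\bar y^i_j=1\}$ otherwise. - Let $\bar U_i=J\setminus U_i$. Here $\triangle$ denotes symmetric difference of sets. *)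

theory Defs
  imports "HOL-Library.FuncSet"
begin

text \<open>Vectors in {0,1}^m are extensional functions {0..<m} \<rightarrow> {0,1}; the family
  y^0, ybar^0, ..., y^{2k}, ybar^{2k} is given by y i and yb i.\<close>

definition symdiff :: "'a set \<Rightarrow> 'a set \<Rightarrow> 'a set" (infixl "\<triangle>" 65) where
  "symdiff A B = (A - B) \<union> (B - A)"

definition Jset :: "nat \<Rightarrow> (nat \<Rightarrow> nat \<Rightarrow> nat) \<Rightarrow> (nat \<Rightarrow> nat \<Rightarrow> nat) \<Rightarrow> nat set" where
  "Jset m y yb = {j \<in> {0..<m}. y 0 j + yb 0 j = 1}"

definition Iset :: "nat \<Rightarrow> (nat \<Rightarrow> nat \<Rightarrow> nat) \<Rightarrow> (nat \<Rightarrow> nat \<Rightarrow> nat) \<Rightarrow> nat set" where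
  "Iset m y yb = {j \<in> {0..<m}. y 0 j = yb 0 j}"

definition Uset :: "nat \<Rightarrow> (nat \<Rightarrow> nat \<Rightarrow> nat) \<Rightarrow> (nat \<Rightarrow> nat \<Rightarrow> nat) \<Rightarrow> nat \<Rightarrow> nat \<Rightarrow> nat set" where
  "Uset m y yb j0 i =
     (if y i j0 = 1 then {j \<in> Jset m y yb. y i j = 1} else {j \<in> Jset m y yb. yb i j = 1})"

definition Ubar :: "nat \<Rightarrow> (nat \<Rightarrow> nat \<Rightarrow> nat) \<Rightarrow> (nat \<Rightarrow> nat \<Rightarrow> nat) \<Rightarrow> nat \<Rightarrow> nat \<Rightarrow> nat set" where
  "Ubar m y yb j0 i = Jset m y yb - Uset m y yb j0 i"

end

theory Submission
  imports Defs
begin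

text \<open>Flipping every pair \<open>(y\<^sup>i, ybar\<^sup>i)\<close> so that the chosen vector has a 1 at \<open>j\<^sub>0\<close>
  gives \<open>2k+1\<close> distinct 0/1 vectors; they agree outside \<open>J\<close> and are
  described on \<open>J\<close> by their 1-sets \<open>U\<^sub>i\<close>, so \<open>i \<mapsto> U\<^sub>i\<close> is injective and every \<open>U\<^sub>i\<close>
  contains \<open>j\<^sub>0\<close>. The set \<open>U\<^sub>0 \<triangle> U\<^sub>1 \<triangle> U\<^sub>t\<close> contains \<open>j\<^sub>0\<close> as well, hence is never a
  complement \<open>Ubar\<^sub>p\<close>. If it were some \<open>U\<^sub>p\<close> for every \<open>t \<in> {2..2k}\<close>, then \<open>t \<mapsto> p\<close> would
  be a fixed-point-free involution of a set with \<open>2k - 1\<close> elements, which is impossible.\<close>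

lemma even_card_if_involution:
  assumes "finite S"
    and "\<And>x. x \<in> S \<Longrightarrow> f x \<in> S"
    and "\<And>x. x \<in> S \<Longrightarrow> f x \<noteq> x"
    and "\<And>x. x \<in> S \<Longrightarrow> f (f x) = x"
  shows "even (card S)"
  using assms
proof (induction "card S" arbitrary: S rule: less_induct)
  case less
  show ?case
  proof (cases "S = {}")
    case False
    then obtain x where x: "x \<in> S" by blast
    let ?S' = "S - {x, f x}"
    have "f x \<noteq> x"
      using x less.prems(3) by blast
    then have pair: "{x, f x} \<subseteq> S" "card {x, f x} = 2"
      using x less.prems(2) by auto
    then have card_S: "card S = card ?S' + 2"
      using card_Diff_subset[of "{x, f x}" S] card_mono[OF less.prems(1) pair(1)] by auto
    have "f z \<in> ?S'" if "z \<in> ?S'" for z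
    proof -
      have z: "z \<in> S" "z \<noteq> x" "z \<noteq> f x"
        using that by auto
      have "f z \<noteq> x" "f z \<noteq> f x"
        using less.prems(4)[OF z(1)] less.prems(4)[OF x] z(2,3) by auto
      then show ?thesis
        using that less.prems(2) by blast
    qed
    then have "even (card ?S')"
      using less.prems card_S by (intro less.hyps) auto
    with card_S show ?thesis by simp
  qed simp
qed

lemma symdiff3_eq_first_iff: "A \<triangle> B \<triangle> C = A \<longleftrightarrow> B = C"
  unfolding symdiff_def by blast

lemma symdiff3_eq_second_iff: "A \<triangle> B \<triangle> C = B \<longleftrightarrow> A = C"
  unfolding symdiff_def by blast

lemma symdiff3_eq_third_iff: "A \<triangle> B \<triangle> C = C \<longleftrightarrow> A = B"
  unfolding symdiff_def by blast

lemma symdiff3_symdiff3: "A \<triangle> B \<triangle> (A \<triangle> B \<triangle> C) = C"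
  unfolding symdiff_def by blast

lemma symdiff3_not_in_image:
  assumes "finite I" "inj_on U I" "a \<in> I" "b \<in> I" "a \<noteq> b"
    and "odd (card (I - {a, b}))"
  shows "\<exists>t \<in> I - {a, b}. U a \<triangle> U b \<triangle> U t \<notin> U ` I"
proof (rule ccontr)
  let ?T = "I - {a, b}"
  assume "\<not> ?thesis"
  then have closed: "U a \<triangle> U b \<triangle> U t \<in> U ` I" if "t \<in> ?T" for t
    using that by blast
  define \<sigma> where "\<sigma> t = inv_into I U (U a \<triangle> U b \<triangle> U t)" for t
  have \<sigma>: "\<sigma> t \<in> I" "U (\<sigma> t) = U a \<triangle> U b \<triangle> U t" if "t \<in> ?T" for t
    using closed[OF that] by (auto simp: \<sigma>_def inv_into_into f_inv_into_f)
  have "even (card ?T)"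
  proof (rule even_card_if_involution)
    fix t assume t: "t \<in> ?T"
    have "U (\<sigma> t) \<noteq> U a" "U (\<sigma> t) \<noteq> U b" "U (\<sigma> t) \<noteq> U t"
      using t \<sigma>[OF t] assms(2-5) inj_on_eq_iff[OF assms(2)]
      by (auto simp: symdiff3_eq_first_iff symdiff3_eq_second_iff symdiff3_eq_third_iff)
    then show in_T: "\<sigma> t \<in> ?T" and "\<sigma> t \<noteq> t"
      using \<sigma>(1)[OF t] by auto
    have "U (\<sigma> (\<sigma> t)) = U t"
      using \<sigma>[OF t] \<sigma>(2)[OF in_T] by (simp add: symdiff3_symdiff3)
    then show "\<sigma> (\<sigma> t) = t"
      using \<sigma>(1)[OF in_T] t inj_on_eq_iff[OF assms(2)] by blast
  qed (use assms(1) in simp)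
  with assms(6) show False by simp
qed

locale complementary_pairs =
  fixes k m :: nat and y yb :: "nat \<Rightarrow> nat \<Rightarrow> nat" and j0 :: nat
  assumes binary: "\<forall>i\<le>2*k. y i \<in> {0..<m} \<rightarrow>\<^sub>E {0,1} \<and> yb i \<in> {0..<m} \<rightarrow>\<^sub>E {0,1}"
    and pairwise_distinct: "\<forall>i\<le>2*k. \<forall>i'\<le>2*k. (i \<noteq> i' \<longrightarrow> y i \<noteq> y i' \<and> yb i \<noteq> yb i') \<and> y i \<noteq> yb i'"
    and pair_sum: "\<forall>i\<le>2*k. \<forall>j<m. y i j + yb i j = y 0 j + yb 0 j"
    and j0_in_J: "j0 \<in> Jset m y yb"
begin

lemma pair_sum_at: "i \<le> 2*k \<Longrightarrow> j < m \<Longrightarrow> y i j + yb i j = y 0 j + yb 0 j"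
  using pair_sum by blast

definition oriented :: "nat \<Rightarrow> nat \<Rightarrow> nat" where
  "oriented i = (if y i j0 = 1 then y i else yb i)"

lemma Uset_eq_oriented: "Uset m y yb j0 i = {j \<in> Jset m y yb. oriented i j = 1}"
  by (simp add: Uset_def oriented_def)

lemma oriented_binary: "i \<le> 2*k \<Longrightarrow> oriented i \<in> {0..<m} \<rightarrow>\<^sub>E {0,1}"
  using binary by (simp add: oriented_def)

lemma j0_in_Uset:
  assumes "i \<le> 2*k"
  shows "j0 \<in> Uset m y yb j0 i"
proof -
  have j0: "j0 < m" "y 0 j0 + yb 0 j0 = 1"
    using j0_in_J by (auto simp: Jset_def)
  then have "y i j0 + yb i j0 = 1"
    using pair_sum_at[OF assms j0(1)] by linarith
  then have "oriented i j0 = 1"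
    by (simp add: oriented_def)
  then show ?thesis
    using j0_in_J by (simp add: Uset_eq_oriented)
qed

lemma j0_notin_Ubar: "i \<le> 2*k \<Longrightarrow> j0 \<notin> Ubar m y yb j0 i"
  using j0_in_Uset by (simp add: Ubar_def)

text \<open>Off \<open>J\<close> the pair sum is 0 or 2, which forces \<open>y\<^sup>i\<^sub>j = ybar\<^sup>i\<^sub>j = y\<^sup>0\<^sub>j\<close>.\<close>
lemma oriented_outside_J:
  assumes "i \<le> 2*k" "j < m" "j \<notin> Jset m y yb"
  shows "oriented i j = y 0 j"
proof -
  have "y i j \<in> {0,1}" "yb i j \<in> {0,1}" "y 0 j \<in> {0,1}" "yb 0 j \<in> {0,1}"
    using binary assms(1,2) by (auto simp: PiE_iff)
  moreover have "y 0 j + yb 0 j \<noteq> 1"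
    using assms(2,3) by (simp add: Jset_def)
  ultimately show ?thesis
    using pair_sum_at[OF assms(1,2)] by (auto simp: oriented_def)
qed

lemma oriented_eq_iff:
  assumes "i \<le> 2*k" "i' \<le> 2*k"
  shows "oriented i = oriented i' \<longleftrightarrow> i = i'"
  using pairwise_distinct[rule_format, of i i'] pairwise_distinct[rule_format, of i' i] assms
  by (auto simp: oriented_def)

lemma inj_on_Uset: "inj_on (Uset m y yb j0) {0..2*k}"
proof (rule inj_onI)
  fix i i' assume i: "i \<in> {0..2*k}" and i': "i' \<in> {0..2*k}"
    and U_eq: "Uset m y yb j0 i = Uset m y yb j0 i'"
  have "oriented i j = oriented i' j" for j
  proof (cases "j < m \<and> j \<in> Jset m y yb")
    case True
    then have "oriented i j \<in> {0,1}" "oriented i' j \<in> {0,1}"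
      "oriented i j = 1 \<longleftrightarrow> oriented i' j = 1"
      using oriented_binary[of i] oriented_binary[of i'] i i' U_eq
      by (auto simp: PiE_iff Uset_eq_oriented set_eq_iff)
    then show ?thesis by auto
  next
    case False
    then show ?thesis
      using oriented_binary[of i] oriented_binary[of i'] oriented_outside_J i i'
      by (cases "j < m") (auto simp: PiE_def extensional_def)
  qed
  then have "oriented i = oriented i'" ..
  with i i' show "i = i'"
    using oriented_eq_iff by simp
qed

end

theorem lemma2:
  fixes k m :: nat and y yb :: "nat \<Rightarrow> nat \<Rightarrow> nat" and j0 :: nat
  assumes "k \<ge> 1" and "m \<ge> 1"
    and "\<forall>i\<le>2*k. y i \<in> {0..<m} \<rightarrow>\<^sub>E {0,1} \<and> yb i \<in> {0..<m} \<rightarrow>\<^sub>E {0,1}"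
    and "\<forall>i\<le>2*k. \<forall>i'\<le>2*k. (i \<noteq> i' \<longrightarrow> y i \<noteq> y i' \<and> yb i \<noteq> yb i') \<and> y i \<noteq> yb i'"
    and "\<forall>i\<le>2*k. \<forall>j<m. y i j + yb i j = y 0 j + yb 0 j"
    and "j0 \<in> Jset m y yb"
  shows "\<exists>t\<in>{2..2*k}. \<forall>p\<le>2*k.
           Uset m y yb j0 0 \<triangle> Uset m y yb j0 1 \<triangle> Uset m y yb j0 t \<noteq> Uset m y yb j0 p \<and>
           Uset m y yb j0 0 \<triangle> Uset m y yb j0 1 \<triangle> Uset m y yb j0 t \<noteq> Ubar m y yb j0 p"
proof -
  interpret complementary_pairs k m y yb j0
    using assms(3-6) by unfold_locales
  let ?U = "Uset m y yb j0"
  have indices: "{0..2*k} - {0, 1} = {2..2*k}"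
    by auto
  have "odd (card {2..2*k})"
    using assms(1) by simp
  then obtain t where t: "t \<in> {2..2*k}" and new: "?U 0 \<triangle> ?U 1 \<triangle> ?U t \<notin> ?U ` {0..2*k}"
    using symdiff3_not_in_image[OF _ inj_on_Uset, of 0 1] assms(1)
    unfolding indices by auto
  have "j0 \<in> ?U 0 \<triangle> ?U 1 \<triangle> ?U t"
    using j0_in_Uset[of 0] j0_in_Uset[of 1] j0_in_Uset[of t] t assms(1)
    by (auto simp: symdiff_def)
  then have "?U 0 \<triangle> ?U 1 \<triangle> ?U t \<noteq> Ubar m y yb j0 p" if "p \<le> 2*k" for p
    using j0_notin_Ubar[OF that] by blast
  moreover have "?U 0 \<triangle> ?U 1 \<triangle> ?U t \<noteq> ?U p" if "p \<le> 2*k" for p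
    using new that by auto
  ultimately show ?thesis
    using t by blast
qed

end
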